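(* Let $(a_n),(b_n),(c_n),(\delta_n),(\xi_n)$ be sequences of real numbers such that $a_n,b_n,c_n,\xi_n\ge0$ for all $n$; $\lim_{n\to\infty}a_n=0$; $\sum_n b_n<\infty$; $\sum_n c_n=\infty$; the series $\sum_n\delta_n$ converges; and there exists $N_0$ such that for all $n>N_0$, $$\xi_{n+1}\le\max\big(a_n,\,(1+b_n)\xi_n+\delta_n-c_n\big).$$ Then $\lim_{n\to\infty}\xi_n=0$. *)

theory Defs
  imports Complex_Main
begin

end

theory Submission
  imports Defs
begin

text \<open>
  Adding to \<open>\<xi>\<close> the tail sums \<open>\<Sum>i\<ge>n. \<delta> i\<close>, shifted by a constant bounding them,
  absorbs the perturbations \<open>\<delta>\<close> and yields \<open>u (n+1) \<le> max K ((1 + b n) * u n)\<close>; as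
  \<open>\<Prod>(1 + b n) \<le> exp (\<Sum>b n)\<close>, the sequence \<open>\<xi>\<close> is eventually bounded by some \<open>C\<close>.
  Then \<open>b n * \<xi> n \<le> C * b n\<close> is summable as well, and adding the tail sums \<open>F\<close> of
  \<open>C * b n + \<delta> n\<close> gives \<open>v (n+1) \<le> max (\<alpha> n) (v n - c n)\<close> with \<open>\<alpha> \<longlonglongrightarrow> 0\<close> and
  \<open>F \<le> v\<close>, \<open>F \<longlonglongrightarrow> 0\<close>. Because \<open>\<Sum>c n\<close> diverges, \<open>v\<close> cannot stay above a level \<open>\<epsilon> > 0\<close>,
  and once below it, it stays below.
\<close>

definition tail_sum :: "(nat \<Rightarrow> 'a::real_normed_vector) \<Rightarrow> nat \<Rightarrow> 'a" where
  "tail_sum f n = (\<Sum>i. f (i + n))"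

lemma tail_sum_Suc:
  assumes "summable f"
  shows "tail_sum f n = f n + tail_sum f (Suc n)"
  using suminf_split_head[OF summable_ignore_initial_segment[OF assms, of n]]
  by (simp add: tail_sum_def)

lemma tendsto_tail_sum:
  assumes "summable f"
  shows "tail_sum f \<longlonglongrightarrow> 0"
proof -
  have "(\<lambda>n. suminf f - (\<Sum>i<n. f i)) \<longlonglongrightarrow> suminf f - suminf f"
    by (intro tendsto_diff tendsto_const summable_LIMSEQ assms)
  moreover have "tail_sum f = (\<lambda>n. suminf f - (\<Sum>i<n. f i))"
    by (simp add: fun_eq_iff tail_sum_def suminf_minus_initial_segment[OF assms])
  ultimately show ?thesis
    by simp
qed

lemma prod_one_plus_le_exp_suminf:
  fixes b :: "nat \<Rightarrow> real"
  assumes "\<And>n. b n \<ge> 0" and "summable b" and "finite I"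
  shows "(\<Prod>i\<in>I. 1 + b i) \<le> exp (suminf b)"
proof -
  have "(\<Prod>i\<in>I. 1 + b i) \<le> (\<Prod>i\<in>I. exp (b i))"
    using assms(1) by (intro prod_mono) auto
  also have "\<dots> = exp (sum b I)"
    using assms(3) by (simp add: exp_sum)
  also have "\<dots> \<le> exp (suminf b)"
    using sum_le_suminf[OF assms(2,3)] assms(1) by simp
  finally show ?thesis .
qed

lemma bounded_of_le_max_mult:
  fixes u b :: "nat \<Rightarrow> real"
  assumes b_nonneg: "\<And>n. b n \<ge> 0" and "summable b"
    and rec: "eventually (\<lambda>n. u (Suc n) \<le> max K ((1 + b n) * u n)) sequentially"
  shows "\<exists>C. eventually (\<lambda>n. u n \<le> C) sequentially"
proof -
  obtain N where rec_N: "\<And>n. n \<ge> N \<Longrightarrow> u (Suc n) \<le> max K ((1 + b n) * u n)"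
    using rec by (auto simp: eventually_sequentially)
  define C0 where "C0 = max 0 (max K (u N))"
  have growth: "u n \<le> C0 * (\<Prod>i\<in>{N..<n}. 1 + b i)" if "N \<le> n" for n
    using that
  proof (induction n rule: dec_induct)
    case base
    then show ?case by (simp add: C0_def)
  next
    case (step n)
    have prod_ge_1: "(\<Prod>i\<in>{N..<Suc n}. 1 + b i) \<ge> 1"
      using b_nonneg by (intro prod_ge_1) auto
    have "K \<le> C0 * (\<Prod>i\<in>{N..<Suc n}. 1 + b i)"
      using mult_left_mono[OF prod_ge_1, of C0] by (simp add: C0_def)
    moreover have "(1 + b n) * u n \<le> C0 * (\<Prod>i\<in>{N..<Suc n}. 1 + b i)"
      using mult_left_mono[OF step.IH, of "1 + b n"] b_nonneg[of n] \<open>N \<le> n\<close>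
      by (simp add: prod.atLeastLessThan_Suc mult_ac)
    ultimately show ?case
      using rec_N[OF \<open>N \<le> n\<close>] by simp
  qed
  have "u n \<le> C0 * exp (suminf b)" if "N \<le> n" for n
  proof -
    have "C0 \<ge> 0" by (simp add: C0_def)
    then have "C0 * (\<Prod>i\<in>{N..<n}. 1 + b i) \<le> C0 * exp (suminf b)"
      by (intro mult_left_mono prod_one_plus_le_exp_suminf assms) auto
    with growth[OF that] show ?thesis by simp
  qed
  then show ?thesis
    unfolding eventually_sequentially by blast
qed

lemma le_max_diff_reaches_level:
  fixes u a c :: "nat \<Rightarrow> real"
  assumes c_nonneg: "\<And>n. c n \<ge> 0" and "\<not> summable c"
    and rec: "\<And>n. n \<ge> M \<Longrightarrow> u (Suc n) \<le> max (a n) (u n - c n)"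
    and a_le: "\<And>n. n \<ge> M \<Longrightarrow> a n \<le> e"
    and lower: "\<And>n. n \<ge> M \<Longrightarrow> L \<le> u n"
  shows "\<exists>m\<ge>M. u m \<le> e"
proof (rule ccontr)
  assume "\<not> (\<exists>m\<ge>M. u m \<le> e)"
  then have above: "\<And>m. m \<ge> M \<Longrightarrow> e < u m"
    by force
  have descent: "u (M + k) \<le> u M - (\<Sum>i<k. c (i + M))" for k
  proof (induction k)
    case 0
    then show ?case by simp
  next
    case (Suc k)
    have "u (Suc (M + k)) \<le> u (M + k) - c (M + k)"
      using rec[of "M + k"] above[of "Suc (M + k)"] a_le[of "M + k"] by auto
    with Suc.IH show ?case
      by (simp add: add.commute)
  qed
  have "summable (\<lambda>i. c (i + M))"
  proof (rule summableI_nonneg_bounded)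
    show "(\<Sum>i<k. c (i + M)) \<le> u M - L" for k
      using descent[of k] lower[of "M + k"] by simp
  qed (use c_nonneg in auto)
  with \<open>\<not> summable c\<close> show False
    by simp
qed

lemma le_max_diff_stays_below_level:
  fixes u a c :: "nat \<Rightarrow> real"
  assumes "\<And>n. c n \<ge> 0"
    and rec: "\<And>n. n \<ge> m \<Longrightarrow> u (Suc n) \<le> max (a n) (u n - c n)"
    and a_le: "\<And>n. n \<ge> m \<Longrightarrow> a n \<le> e"
    and "u m \<le> e" and "m \<le> n"
  shows "u n \<le> e"
  using \<open>m \<le> n\<close>
proof (induction n rule: dec_induct)
  case base
  then show ?case using \<open>u m \<le> e\<close> by simp
next
  case (step n)
  then show ?case
    using rec[of n] a_le[of n] assms(1)[of n] by auto
qed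

lemma tendsto_zero_of_le_max_diff:
  fixes u a c F :: "nat \<Rightarrow> real"
  assumes "\<And>n. c n \<ge> 0" and "\<not> summable c"
    and "a \<longlonglongrightarrow> 0" and "F \<longlonglongrightarrow> 0" and lower: "\<And>n. F n \<le> u n"
    and rec: "eventually (\<lambda>n. u (Suc n) \<le> max (a n) (u n - c n)) sequentially"
  shows "u \<longlonglongrightarrow> 0"
proof (rule order_tendstoI)
  fix r :: real
  assume "r < 0"
  then have "eventually (\<lambda>n. r < F n) sequentially"
    by (rule order_tendstoD(1)[OF \<open>F \<longlonglongrightarrow> 0\<close>])
  then show "eventually (\<lambda>n. r < u n) sequentially"
    by eventually_elim (use lower in \<open>auto intro: less_le_trans\<close>)
next
  fix r :: real
  assume "0 < r"
  define e where "e = r / 2"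
  have "e > 0" "e < r"
    using \<open>0 < r\<close> by (simp_all add: e_def)
  have "eventually (\<lambda>n. u (Suc n) \<le> max (a n) (u n - c n) \<and> a n < e \<and> - e < F n) sequentially"
    using rec order_tendstoD(2)[OF \<open>a \<longlonglongrightarrow> 0\<close> \<open>e > 0\<close>]
      order_tendstoD(1)[OF \<open>F \<longlonglongrightarrow> 0\<close>, of "- e"] \<open>e > 0\<close>
    by (simp add: eventually_conj_iff)
  then obtain M where M: "\<And>n. n \<ge> M \<Longrightarrow>
      u (Suc n) \<le> max (a n) (u n - c n) \<and> a n < e \<and> - e < F n"
    by (auto simp: eventually_sequentially)
  then have rec_M: "\<And>n. n \<ge> M \<Longrightarrow> u (Suc n) \<le> max (a n) (u n - c n)"
    and a_M: "\<And>n. n \<ge> M \<Longrightarrow> a n \<le> e" and lower_M: "\<And>n. n \<ge> M \<Longrightarrow> - e \<le> u n"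
    using lower by (force, force, meson less_imp_le less_le_trans)
  obtain m where "m \<ge> M" "u m \<le> e"
    using le_max_diff_reaches_level[where u = u and a = a, OF assms(1,2) rec_M a_M lower_M] by blast
  have "u n \<le> e" if "m \<le> n" for n
    by (rule le_max_diff_stays_below_level[where m = m and a = a and c = c])
      (use assms(1) rec_M a_M \<open>M \<le> m\<close> \<open>u m \<le> e\<close> that in auto)
  then show "eventually (\<lambda>n. u n < r) sequentially"
    unfolding eventually_sequentially using \<open>e < r\<close> by force
qed

lemma bounded_of_le_max_perturbed:
  fixes a b c \<delta> \<xi> :: "nat \<Rightarrow> real"
  assumes a_le: "\<And>n. a n \<le> A" and b_nonneg: "\<And>n. b n \<ge> 0" and c_nonneg: "\<And>n. c n \<ge> 0"
    and "summable b" and "summable \<delta>"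
    and rec: "eventually (\<lambda>n. \<xi> (Suc n) \<le> max (a n) ((1 + b n) * \<xi> n + \<delta> n - c n)) sequentially"
  shows "\<exists>C. eventually (\<lambda>n. \<xi> n \<le> C) sequentially"
proof -
  define D where "D = tail_sum \<delta>"
  have D_Suc: "D n = \<delta> n + D (Suc n)" for n
    unfolding D_def by (rule tail_sum_Suc[OF \<open>summable \<delta>\<close>])
  obtain M where M: "\<And>n. \<bar>D n\<bar> \<le> M"
    using tendsto_tail_sum[OF \<open>summable \<delta>\<close>]
    by (metis BseqE D_def convergentI convergent_imp_Bseq real_norm_def)
  have D_M_nonneg: "0 \<le> D n + M" for n
    using M[of n] by arith
  define u where "u n = \<xi> n + D n + M" for n
  have "eventually (\<lambda>n. u (Suc n) \<le> max (A + 2 * M) ((1 + b n) * u n)) sequentially"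
    using rec
  proof eventually_elim
    case (elim n)
    show ?case
    proof (cases "\<xi> (Suc n) \<le> a n")
      case True
      then show ?thesis
        using a_le[of n] M[of "Suc n"] by (simp add: u_def)
    next
      case False
      with elim have "u (Suc n) \<le> (1 + b n) * \<xi> n + \<delta> n - c n + D (Suc n) + M"
        by (simp add: u_def)
      also have "\<dots> = (1 + b n) * u n - b n * (D n + M) - c n"
        using D_Suc[of n] by (simp add: u_def algebra_simps)
      also have "\<dots> \<le> (1 + b n) * u n"
      proof -
        have "0 \<le> b n * (D n + M)"
          using b_nonneg[of n] D_M_nonneg[of n] by simp
        then show ?thesis
          using c_nonneg[of n] by simp
      qed
      finally show ?thesis
        by simp
    qed
  qed
  then obtain C where "eventually (\<lambda>n. u n \<le> C) sequentially"
    using bounded_of_le_max_mult[OF b_nonneg \<open>summable b\<close>] by blast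
  then have "eventually (\<lambda>n. \<xi> n \<le> C) sequentially"
  proof eventually_elim
    case (elim n)
    then show ?case
      using D_M_nonneg[of n] by (simp add: u_def)
  qed
  then show ?thesis ..
qed

lemma tendsto_zero_of_le_max_summable_perturbation:
  fixes a c e \<xi> :: "nat \<Rightarrow> real"
  assumes "\<And>n. c n \<ge> 0" and "\<not> summable c" and "\<And>n. \<xi> n \<ge> 0"
    and "a \<longlonglongrightarrow> 0" and "summable e"
    and rec: "eventually (\<lambda>n. \<xi> (Suc n) \<le> max (a n) (\<xi> n + e n - c n)) sequentially"
  shows "\<xi> \<longlonglongrightarrow> 0"
proof -
  define F where "F = tail_sum e"
  have F_Suc: "F n = e n + F (Suc n)" for n
    unfolding F_def by (rule tail_sum_Suc[OF \<open>summable e\<close>])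
  have "F \<longlonglongrightarrow> 0"
    unfolding F_def by (rule tendsto_tail_sum[OF \<open>summable e\<close>])
  have "(\<lambda>n. \<xi> n + F n) \<longlonglongrightarrow> 0"
  proof (rule tendsto_zero_of_le_max_diff[where a = "\<lambda>n. a n + F (Suc n)"])
    show "(\<lambda>n. a n + F (Suc n)) \<longlonglongrightarrow> 0"
      using tendsto_add[OF \<open>a \<longlonglongrightarrow> 0\<close> LIMSEQ_Suc[OF \<open>F \<longlonglongrightarrow> 0\<close>]] by simp
    show "eventually (\<lambda>n. \<xi> (Suc n) + F (Suc n)
        \<le> max (a n + F (Suc n)) (\<xi> n + F n - c n)) sequentially"
      using rec
    proof eventually_elim
      case (elim n)
      then show ?case
        using F_Suc[of n] by (auto simp: max_def)
    qed
  qed (use assms(1-3) \<open>F \<longlonglongrightarrow> 0\<close> in auto)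
  then have "(\<lambda>n. (\<xi> n + F n) - F n) \<longlonglongrightarrow> 0 - 0"
    using \<open>F \<longlonglongrightarrow> 0\<close> by (rule tendsto_diff)
  then show ?thesis
    by simp
qed

theorem mainTheorem4:
  fixes a b c \<delta> \<xi> :: "nat \<Rightarrow> real"
  assumes "\<And>n. a n \<ge> 0" and "\<And>n. b n \<ge> 0" and "\<And>n. c n \<ge> 0" and "\<And>n. \<xi> n \<ge> 0"
    and "a \<longlonglongrightarrow> 0"
    and "summable b"
    and "\<not> summable c"
    and "summable \<delta>"
    and "\<exists>N0. \<forall>n>N0. \<xi> (Suc n) \<le> max (a n) ((1 + b n) * \<xi> n + \<delta> n - c n)"
  shows "\<xi> \<longlonglongrightarrow> 0"
proof -
  have rec: "eventually (\<lambda>n. \<xi> (Suc n) \<le> max (a n) ((1 + b n) * \<xi> n + \<delta> n - c n)) sequentially"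
    using assms(9) unfolding eventually_sequentially by (metis Suc_le_eq)
  obtain A where "\<And>n. a n \<le> A"
    using assms(5) by (metis BseqE abs_le_D1 convergentI convergent_imp_Bseq real_norm_def)
  then obtain C where bound: "eventually (\<lambda>n. \<xi> n \<le> C) sequentially"
    using bounded_of_le_max_perturbed[OF _ assms(2,3,6,8) rec] by blast
  have "eventually (\<lambda>n. \<xi> (Suc n) \<le> max (a n) (\<xi> n + (C * b n + \<delta> n) - c n)) sequentially"
    using rec bound
  proof eventually_elim
    case (elim n)
    have "b n * \<xi> n \<le> b n * C"
      using elim(2) assms(2)[of n] by (rule mult_left_mono)
    then have "(1 + b n) * \<xi> n + \<delta> n - c n \<le> \<xi> n + (C * b n + \<delta> n) - c n"
      by (simp add: algebra_simps)
    then show ?case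
      using elim(1) by (meson max.mono order.refl order.trans)
  qed
  moreover have "summable (\<lambda>n. C * b n + \<delta> n)"
    using assms(6,8) by (intro summable_add summable_mult)
  ultimately show ?thesis
    by (intro tendsto_zero_of_le_max_summable_perturbation[OF assms(3,7,4,5)])
qed

end
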